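(* For every tree $T$, $\mathrm{opt}(T)=\mathsf{vc}(T)$; moreover, the simple protocol in which exactly the vertices of a minimum vertex cover of $T$ broadcast their entire input solves the multiparty equality problem and is optimal.
   Context: Multiparty equality in the local broadcast model: $G$ is a connected graph and $k$ a positive integer; every vertex $v$ receives an input $\lambda(v)\in\{0,1\}^k$. Vertices communicate by broadcasting messages; a message broadcast by a vertex is received by all of its neighbours, and its number of bits is counted once. Protocols are deterministic and static: which vertices send messages and the message lengths depend only on $G$ and $k$, while message contents may depend on inputs. At the end every vertex accepts or rejects; the protocol solves the problem if all vertices accept when all inputs are equal and at least one vertex rejects when two inputs differ. Total cost = sum over vertices of the number of bits broadcast; $\mathrm{opt}(G,k)$ is the minimum total cost of a solving protocol and $\mathrm{opt}(G)=\lim_{k\to\infty}\mathrm{opt}(G,k)/k$. A simple protocol is one in which each vertex of a fixed set $S$ broadcasts its whole input and all other vertices are silent, and each vertex accepts iff every input it received equals its own input; its per-bit cost is $|S|$. $\mathsf{vc}(T)$ is the minimum size of a vertex cover of $T$. *)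

theory Defs
  imports Complex_Main
begin

definition is_graph :: "'a set \<Rightarrow> ('a \<Rightarrow> 'a \<Rightarrow> bool) \<Rightarrow> bool" where
  "is_graph V E \<longleftrightarrow> finite V \<and> (\<forall>u v. E u v \<longrightarrow> u \<in> V \<and> v \<in> V)
     \<and> (\<forall>u v. E u v \<longrightarrow> E v u) \<and> (\<forall>u. \<not> E u u)"

definition connected_graph :: "'a set \<Rightarrow> ('a \<Rightarrow> 'a \<Rightarrow> bool) \<Rightarrow> bool" where
  "connected_graph V E \<longleftrightarrow> is_graph V E \<and> V \<noteq> {} \<and> (\<forall>u\<in>V. \<forall>v\<in>V. E\<^sup>*\<^sup>* u v)"

definition is_cycle :: "('a \<Rightarrow> 'a \<Rightarrow> bool) \<Rightarrow> 'a list \<Rightarrow> bool" where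
  "is_cycle E cs \<longleftrightarrow> length cs \<ge> 3 \<and> distinct cs
     \<and> (\<forall>i. Suc i < length cs \<longrightarrow> E (cs ! i) (cs ! Suc i))
     \<and> E (last cs) (hd cs)"

definition is_tree :: "'a set \<Rightarrow> ('a \<Rightarrow> 'a \<Rightarrow> bool) \<Rightarrow> bool" where
  "is_tree V E \<longleftrightarrow> connected_graph V E \<and> (\<nexists>cs. is_cycle E cs)"

definition vertex_cover :: "'a set \<Rightarrow> ('a \<Rightarrow> 'a \<Rightarrow> bool) \<Rightarrow> 'a set \<Rightarrow> bool" where
  "vertex_cover V E S \<longleftrightarrow> S \<subseteq> V \<and> (\<forall>u v. E u v \<longrightarrow> u \<in> S \<or> v \<in> S)"

definition vc :: "'a set \<Rightarrow> ('a \<Rightarrow> 'a \<Rightarrow> bool) \<Rightarrow> nat" where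
  "vc V E = (LEAST n. \<exists>S. vertex_cover V E S \<and> card S = n)"

definition min_vertex_cover :: "'a set \<Rightarrow> ('a \<Rightarrow> 'a \<Rightarrow> bool) \<Rightarrow> 'a set \<Rightarrow> bool" where
  "min_vertex_cover V E S \<longleftrightarrow> vertex_cover V E S \<and> card S = vc V E"

text \<open>A static protocol consists of
  \<^item> a schedule: a list of broadcasts (sender, message length), fixed in advance
    (it depends only on the graph and k);
  \<^item> message functions: the message of step j is computed by its sender from its own input
    and its current view (the messages of all earlier steps, where a message is visible,
    \<open>Some m\<close>, iff it was broadcast by the vertex itself or by a neighbour, and \<open>None\<close> otherwise);
  \<^item> decision functions: at the end, vertex v accepts depending on its input and final view.\<close>
type_synonym 'a protocol =
  "('a \<times> nat) list \<times> (nat \<Rightarrow> bool list \<Rightarrow> bool list option list \<Rightarrow> bool list)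
     \<times> ('a \<Rightarrow> bool list \<Rightarrow> bool list option list \<Rightarrow> bool)"

definition sched :: "'a protocol \<Rightarrow> ('a \<times> nat) list" where "sched P = fst P"
definition msgf :: "'a protocol \<Rightarrow> nat \<Rightarrow> bool list \<Rightarrow> bool list option list \<Rightarrow> bool list"
  where "msgf P = fst (snd P)"
definition decf :: "'a protocol \<Rightarrow> 'a \<Rightarrow> bool list \<Rightarrow> bool list option list \<Rightarrow> bool"
  where "decf P = snd (snd P)"

definition view :: "('a \<Rightarrow> 'a \<Rightarrow> bool) \<Rightarrow> 'a protocol \<Rightarrow> 'a \<Rightarrow> bool list list \<Rightarrow> bool list option list" where
  "view E P v ms = map (\<lambda>i. if fst (sched P ! i) = v \<or> E (fst (sched P ! i)) v
                            then Some (ms ! i) else None) [0..<length ms]"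

fun transcript :: "('a \<Rightarrow> 'a \<Rightarrow> bool) \<Rightarrow> 'a protocol \<Rightarrow> ('a \<Rightarrow> bool list) \<Rightarrow> nat \<Rightarrow> bool list list" where
  "transcript E P x 0 = []"
| "transcript E P x (Suc j) =
     (let ms = transcript E P x j; v = fst (sched P ! j)
      in ms @ [msgf P j (x v) (view E P v ms)])"

definition accepts :: "('a \<Rightarrow> 'a \<Rightarrow> bool) \<Rightarrow> 'a protocol \<Rightarrow> ('a \<Rightarrow> bool list) \<Rightarrow> 'a \<Rightarrow> bool" where
  "accepts E P x v = decf P v (x v) (view E P v (transcript E P x (length (sched P))))"

definition wf_protocol :: "'a set \<Rightarrow> nat \<Rightarrow> 'a protocol \<Rightarrow> bool" where
  "wf_protocol V k P \<longleftrightarrow> (\<forall>j < length (sched P). fst (sched P ! j) \<in> V \<and>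
       (\<forall>a w. length a = k \<longrightarrow> length (msgf P j a w) = snd (sched P ! j)))"

definition solves :: "'a set \<Rightarrow> ('a \<Rightarrow> 'a \<Rightarrow> bool) \<Rightarrow> nat \<Rightarrow> 'a protocol \<Rightarrow> bool" where
  "solves V E k P \<longleftrightarrow> wf_protocol V k P \<and>
     (\<forall>x. (\<forall>v\<in>V. length (x v) = k) \<longrightarrow>
        ((\<forall>u\<in>V. \<forall>v\<in>V. x u = x v) \<longrightarrow> (\<forall>v\<in>V. accepts E P x v)) \<and>
        ((\<exists>u\<in>V. \<exists>v\<in>V. x u \<noteq> x v) \<longrightarrow> (\<exists>v\<in>V. \<not> accepts E P x v)))"

definition cost :: "'a protocol \<Rightarrow> nat" where
  "cost P = sum_list (map snd (sched P))"

definition opt :: "'a set \<Rightarrow> ('a \<Rightarrow> 'a \<Rightarrow> bool) \<Rightarrow> nat \<Rightarrow> nat" where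
  "opt V E k = (LEAST c. \<exists>P. solves V E k P \<and> cost P = c)"

definition simple_protocol :: "'a list \<Rightarrow> nat \<Rightarrow> 'a protocol" where
  "simple_protocol vs k =
     (map (\<lambda>v. (v, k)) vs, (\<lambda>j a w. a), (\<lambda>v a w. \<forall>m\<in>set w. m = None \<or> m = Some a))"

end

theory Submission
  imports Defs "HOL-Library.Transitive_Closure_Table"
begin

text \<open>The simple protocol of a vertex cover S costs |S| k bits, and it is correct on a connected
  graph: unequal inputs differ across some edge, and one end of that edge broadcasts its input
  to the other.

  Conversely, deleting an edge uv of a tree leaves two sides that communicate only through the
  messages of u and v. If two different constant inputs a and b produced the same messages at u
  and v, then on the input that is a on the side of u and b on the side of v every vertex would
  see what it sees under a constant input and accept. So u and v together broadcast at least k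
  bits. Vertex weights with b u + b v \<ge> k on every edge of a forest pay for a vertex cover
  (take the neighbour of a leaf and recurse), hence every protocol costs at least k vc(T).\<close>

definition is_forest :: "'a set \<Rightarrow> ('a \<Rightarrow> 'a \<Rightarrow> bool) \<Rightarrow> bool" where
  "is_forest V E \<longleftrightarrow> is_graph V E \<and> (\<nexists>cs. is_cycle E cs)"

definition is_path :: "('a \<Rightarrow> 'a \<Rightarrow> bool) \<Rightarrow> 'a list \<Rightarrow> bool" where
  "is_path E ps \<longleftrightarrow> distinct ps \<and> (\<forall>i. Suc i < length ps \<longrightarrow> E (ps ! i) (ps ! Suc i))"

lemma is_cycle_iff_path: "is_cycle E cs \<longleftrightarrow> 3 \<le> length cs \<and> is_path E cs \<and> E (last cs) (hd cs)"
  by (auto simp: is_cycle_def is_path_def)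

lemma is_tree_imp_forest: "is_tree V E \<Longrightarrow> is_forest V E"
  by (simp add: is_tree_def is_forest_def connected_graph_def)

lemma is_forest_restrict:
  assumes "is_forest V E" "V' \<subseteq> V"
  shows "is_forest V' (\<lambda>a c. E a c \<and> a \<in> V' \<and> c \<in> V')"
  using assms finite_subset
  by (fastforce simp: is_forest_def is_graph_def is_cycle_def)

lemma path_subset_vertices:
  assumes "is_graph V E" "is_path E ps" "2 \<le> length ps"
  shows "set ps \<subseteq> V"
proof
  fix a assume "a \<in> set ps"
  then obtain i where i: "i < length ps" "ps ! i = a" by (auto simp: in_set_conv_nth)
  show "a \<in> V"
  proof (cases "Suc i < length ps")
    case True
    then show ?thesis using assms i by (auto simp: is_path_def is_graph_def)
  next
    case False
    then have "Suc (i - 1) < length ps" "Suc (i - 1) = i" using i assms(3) by auto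
    then show ?thesis using assms i unfolding is_path_def is_graph_def by metis
  qed
qed

text \<open>A neighbour q already on the path would close the cycle from q to the last vertex.\<close>
lemma forest_path_snoc:
  assumes forest: "is_forest V E" and ps: "is_path E ps" "2 \<le> length ps"
    and q: "E (last ps) q" "q \<noteq> ps ! (length ps - 2)"
  shows "is_path E (ps @ [q])"
proof -
  have last: "last ps = ps ! (length ps - 1)" using ps(2) by (subst last_conv_nth) auto
  show ?thesis
  proof (cases "q \<in> set ps")
    case False
    with last ps q show ?thesis
      by (auto simp: is_path_def nth_append less_Suc_eq) (metis diff_Suc_1 One_nat_def)
  next
    case True
    then obtain i where i: "i < length ps" "ps ! i = q" by (auto simp: in_set_conv_nth)
    have "\<not> E q q" using forest by (simp add: is_forest_def is_graph_def)
    then have "i \<noteq> length ps - 1" using q(1) i last by auto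
    moreover have "i \<noteq> length ps - 2" using i q(2) by auto
    ultimately have "i + 3 \<le> length ps" using i(1) by linarith
    then have "is_cycle E (drop i ps)"
      using ps q(1) i by (auto simp: is_cycle_iff_path is_path_def hd_drop_conv_nth)
    with forest show ?thesis by (simp add: is_forest_def)
  qed
qed

lemma forest_has_leaf:
  assumes forest: "is_forest V E" and "E a c"
  obtains l p where "E l p" "\<And>q. E l q \<Longrightarrow> q = p"
proof (rule ccontr)
  assume "\<not> thesis"
  with that have no_leaf: "\<exists>q. E l q \<and> q \<noteq> p" if "E l p" for l p
    using \<open>E l p\<close> by blast
  have "\<exists>ps. is_path E ps \<and> length ps = m + 2" for m
  proof (induction m)
    case 0
    have "a \<noteq> c" using forest \<open>E a c\<close> by (auto simp: is_forest_def is_graph_def)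
    then have "is_path E [a, c]" using \<open>E a c\<close> by (simp add: is_path_def less_Suc_eq)
    then show ?case by auto
  next
    case (Suc m)
    then obtain ps where ps: "is_path E ps" "length ps = m + 2" by blast
    have "last ps = ps ! Suc m" using ps(2) by (subst last_conv_nth) auto
    then have "E (ps ! m) (last ps)"
      using ps by (simp add: is_path_def)
    then have "E (last ps) (ps ! m)"
      using forest by (simp add: is_forest_def is_graph_def)
    then obtain q where "E (last ps) q" "q \<noteq> ps ! m" using no_leaf by blast
    then have "is_path E (ps @ [q])"
      using forest_path_snoc[OF forest ps(1)] ps(2) by simp
    then show ?case using ps(2) by auto
  qed
  then obtain ps where ps: "is_path E ps" "length ps = card V + 2" by blast
  have "set ps \<subseteq> V" "finite V"
    using forest ps path_subset_vertices[of V E ps] by (auto simp: is_forest_def is_graph_def)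
  then have "card (set ps) \<le> card V" by (simp add: card_mono)
  moreover have "card (set ps) = length ps" using ps(1) by (simp add: is_path_def distinct_card)
  ultimately show False using ps(2) by simp
qed

lemma forest_edge_cut:
  assumes forest: "is_forest V E" and uv: "E u v"
  obtains A where "u \<in> A" "v \<notin> A" "\<And>a c. a \<in> A \<Longrightarrow> c \<notin> A \<Longrightarrow> E a c \<Longrightarrow> a = u \<and> c = v"
proof -
  define E' where "E' a c \<longleftrightarrow> E a c \<and> {a, c} \<noteq> {u, v}" for a c
  define A where "A = {w. E'\<^sup>*\<^sup>* u w}"
  have graph: "is_graph V E" and acyclic: "\<nexists>cs. is_cycle E cs"
    using forest by (auto simp: is_forest_def)
  have "v \<notin> A"
  proof
    assume "v \<in> A"
    then obtain ys where ys: "rtrancl_path E' u ys v" "distinct (u # ys)"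
      by (metis A_def mem_Collect_eq rtranclp_eq_rtrancl_path rtrancl_path_distinct)
    have "u \<noteq> v" using graph uv by (auto simp: is_graph_def)
    then have "ys \<noteq> []" using ys(1) by (auto elim: rtrancl_path.cases)
    then have last: "last ys = v" using ys(1) by (rule rtrancl_path_last[rotated])
    have step: "E' ((u # ys) ! i) (ys ! i)" if "i < length ys" for i
      using rtrancl_path_nth[OF ys(1) that] .
    have "ys \<noteq> [v]" using step[of 0] by (auto simp: E'_def)
    with \<open>ys \<noteq> []\<close> last have "2 \<le> length ys"
      by (cases ys) (auto simp: Suc_le_eq)
    moreover have "E v u" using graph uv by (simp add: is_graph_def)
    ultimately have "is_cycle E (u # ys)"
      using ys(2) step last \<open>ys \<noteq> []\<close> by (auto simp: is_cycle_iff_path is_path_def E'_def)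
    with acyclic show False by blast
  qed
  moreover have "a = u \<and> c = v" if "a \<in> A" "c \<notin> A" "E a c" for a c
  proof -
    have "\<not> E' a c" using that by (auto simp: A_def intro: rtranclp.rtrancl_into_rtrancl)
    then have "{a, c} = {u, v}" using that(3) by (simp add: E'_def)
    then show ?thesis using that \<open>v \<notin> A\<close> by (auto simp: doubleton_eq_iff A_def)
  qed
  moreover have "u \<in> A" by (simp add: A_def)
  ultimately show ?thesis using that by blast
qed

text \<open>Delete a leaf l together with its neighbour p, recurse, and put p into the cover:
  the weight b l + b p \<ge> k pays for p.\<close>
lemma forest_vertex_cover_weight:
  fixes b :: "'a \<Rightarrow> nat"
  assumes "is_forest V E" and "\<And>a c. E a c \<Longrightarrow> k \<le> b a + b c"
  obtains S where "vertex_cover V E S" "k * card S \<le> (\<Sum>w\<in>V. b w)"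
  using assms
proof (induction "card V" arbitrary: V E thesis rule: less_induct)
  case less
  show ?case
  proof (cases "\<exists>a c. E a c")
    case False
    then have "vertex_cover V E {}" by (simp add: vertex_cover_def)
    then show ?thesis using less.prems(1) by force
  next
    case True
    then obtain l p where lp: "E l p" and leaf: "\<And>q. E l q \<Longrightarrow> q = p"
      using forest_has_leaf[OF less.prems(2)] by metis
    have graph: "is_graph V E" using less.prems(2) by (simp add: is_forest_def)
    then have "l \<in> V" "p \<in> V" "l \<noteq> p" "finite V" using lp by (auto simp: is_graph_def)
    define V' where "V' = V - {l, p}"
    define E' where "E' a c \<longleftrightarrow> E a c \<and> a \<in> V' \<and> c \<in> V'" for a c
    have "card V' < card V"
      unfolding V'_def using \<open>l \<in> V\<close> \<open>finite V\<close> by (intro psubset_card_mono) auto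
    moreover have "is_forest V' E'"
      unfolding E'_def by (rule is_forest_restrict[OF less.prems(2)]) (auto simp: V'_def)
    ultimately obtain S where S: "vertex_cover V' E' S" "k * card S \<le> (\<Sum>w\<in>V'. b w)"
      using less.hyps less.prems(3) by (metis E'_def)
    have "vertex_cover V E (insert p S)"
      using S(1) graph lp leaf \<open>p \<in> V\<close>
      unfolding vertex_cover_def is_graph_def E'_def V'_def by blast
    moreover have "k * card (insert p S) \<le> (\<Sum>w\<in>V. b w)"
    proof -
      have "finite S"
        using S(1) \<open>finite V\<close> by (auto simp: vertex_cover_def V'_def intro: finite_subset)
      then have "k * card (insert p S) \<le> k * card S + k" by (simp add: card_insert_if)
      also have "\<dots> \<le> (\<Sum>w\<in>V'. b w) + (b l + b p)" using S(2) less.prems(3)[OF lp] by simp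
      also have "\<dots> = (\<Sum>w\<in>V. b w)"
        using sum.subset_diff[of "{l, p}" V b] \<open>l \<in> V\<close> \<open>p \<in> V\<close> \<open>l \<noteq> p\<close> \<open>finite V\<close>
        by (simp add: V'_def)
      finally show ?thesis .
    qed
    ultimately show ?thesis by (rule less.prems(1))
  qed
qed

lemma transcript_length [simp]: "length (transcript E P x j) = j"
  by (induction j) (simp_all add: Let_def)

lemma take_transcript: "j \<le> m \<Longrightarrow> take j (transcript E P x m) = transcript E P x j"
  by (induction m) (auto simp: Let_def le_Suc_eq)

lemma transcript_nth_prefix: "i < j \<Longrightarrow> j \<le> m \<Longrightarrow> transcript E P x m ! i = transcript E P x j ! i"
  by (metis nth_take take_transcript)

lemma transcript_nth:
  "i < n \<Longrightarrow> transcript E P x n ! i =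
     msgf P i (x (fst (sched P ! i))) (view E P (fst (sched P ! i)) (transcript E P x i))"
  using transcript_nth_prefix[of i "Suc i" n E P x] by (simp add: Let_def nth_append)

lemma view_cong:
  assumes "length ms = length ms'"
    and "\<And>i. i < length ms \<Longrightarrow> fst (sched P ! i) = w \<or> E (fst (sched P ! i)) w \<Longrightarrow> ms ! i = ms' ! i"
  shows "view E P w ms = view E P w ms'"
  using assms by (auto simp: view_def)

text \<open>Cut and paste: if no message crossing the cut (A, -A) distinguishes the runs on x and y,
  then on the input that follows x inside A and y outside, every vertex w sees the messages it
  sees in the run of its own side.\<close>
lemma transcript_mix:
  fixes x y :: "'a \<Rightarrow> bool list"
  assumes agree: "\<And>i w. i < n \<Longrightarrow> E (fst (sched P ! i)) w \<Longrightarrow> (fst (sched P ! i) \<in> A) \<noteq> (w \<in> A)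
      \<Longrightarrow> transcript E P x n ! i = transcript E P y n ! i"
  shows "i < n \<Longrightarrow> fst (sched P ! i) = w \<or> E (fst (sched P ! i)) w \<Longrightarrow>
    transcript E P (\<lambda>v. if v \<in> A then x v else y v) n ! i = transcript E P (if w \<in> A then x else y) n ! i"
proof (induction i arbitrary: w rule: less_induct)
  case (less i)
  define side where "side v = (if v \<in> A then x else y)" for v
  let ?z = "\<lambda>v. if v \<in> A then x v else y v"
  let ?s = "fst (sched P ! i)"
  have "view E P ?s (transcript E P ?z i) = view E P ?s (transcript E P (side ?s) i)"
  proof (rule view_cong)
    fix j assume "j < length (transcript E P ?z i)" and seen: "fst (sched P ! j) = ?s \<or> E (fst (sched P ! j)) ?s"
    then have j: "j < i" "i \<le> n" using less.prems(1) by simp_all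
    then have "transcript E P ?z i ! j = transcript E P ?z n ! j" by (simp add: transcript_nth_prefix[OF j])
    also have "\<dots> = transcript E P (side ?s) n ! j"
      using less.IH[OF j(1) _ seen] j by (simp add: side_def)
    also have "\<dots> = transcript E P (side ?s) i ! j" by (simp add: transcript_nth_prefix[OF j])
    finally show "transcript E P ?z i ! j = transcript E P (side ?s) i ! j" .
  qed simp
  moreover have "?z ?s = side ?s ?s" by (simp add: side_def)
  ultimately have own: "transcript E P ?z n ! i = transcript E P (side ?s) n ! i"
    using less.prems(1) by (simp add: transcript_nth)
  show ?case
  proof (cases "(?s \<in> A) = (w \<in> A)")
    case True
    then show ?thesis using own by (simp add: side_def)
  next
    case False
    then have "E ?s w" using less.prems(2) by auto
    then show ?thesis using own agree[OF less.prems(1) _ False] False by (auto simp: side_def)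
  qed
qed

lemma accepts_mix:
  fixes x y :: "'a \<Rightarrow> bool list"
  assumes "\<And>i w. i < length (sched P) \<Longrightarrow> E (fst (sched P ! i)) w \<Longrightarrow> (fst (sched P ! i) \<in> A) \<noteq> (w \<in> A)
      \<Longrightarrow> transcript E P x (length (sched P)) ! i = transcript E P y (length (sched P)) ! i"
  shows "accepts E P (\<lambda>v. if v \<in> A then x v else y v) w = accepts E P (if w \<in> A then x else y) w"
proof -
  have "view E P w (transcript E P (\<lambda>v. if v \<in> A then x v else y v) (length (sched P)))
      = view E P w (transcript E P (if w \<in> A then x else y) (length (sched P)))"
    by (rule view_cong) (simp_all add: transcript_mix[OF assms])
  then show ?thesis by (simp add: accepts_def)
qed

lemma solves_accepts_constant:
  assumes "solves V E k P" "length a = k" "w \<in> V"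
  shows "accepts E P (\<lambda>_. a) w"
  using assms by (simp add: solves_def)

lemma solves_rejects_nonconstant:
  assumes "solves V E k P" "\<forall>v\<in>V. length (x v) = k" "u \<in> V" "v \<in> V" "x u \<noteq> x v"
  obtains w where "w \<in> V" "\<not> accepts E P x w"
  using assms unfolding solves_def by blast

text \<open>Otherwise the input that is a on the side of u and b on the side of v would be accepted
  everywhere, since only u and v talk across the edge uv.\<close>
lemma edge_messages_determine_input:
  assumes forest: "is_forest V E" and uv: "E u v" and sol: "solves V E k P"
    and len: "length a = k" "length b = k"
    and same: "\<And>i. i < length (sched P) \<Longrightarrow> fst (sched P ! i) \<in> {u, v} \<Longrightarrow>
      transcript E P (\<lambda>_. a) (length (sched P)) ! i = transcript E P (\<lambda>_. b) (length (sched P)) ! i"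
  shows "a = b"
proof (rule ccontr)
  assume "a \<noteq> b"
  obtain A where A: "u \<in> A" "v \<notin> A" and cut: "\<And>s w. s \<in> A \<Longrightarrow> w \<notin> A \<Longrightarrow> E s w \<Longrightarrow> s = u \<and> w = v"
    using forest_edge_cut[OF forest uv] by blast
  have graph: "is_graph V E" using forest by (simp add: is_forest_def)
  have crossing: "s \<in> {u, v}" if "E s w" "(s \<in> A) \<noteq> (w \<in> A)" for s w
    using that cut[of s w] cut[of w s] graph by (auto simp: is_graph_def)
  let ?z = "\<lambda>w. if w \<in> A then a else b"
  have "accepts E P ?z w" if "w \<in> V" for w
    using accepts_mix[of P E A "\<lambda>_. a" "\<lambda>_. b" w] same crossing
      solves_accepts_constant[OF sol len(1) that] solves_accepts_constant[OF sol len(2) that]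
    by (auto simp: if_distrib)
  moreover have "\<forall>w\<in>V. length (?z w) = k" and "u \<in> V" "v \<in> V" and "?z u \<noteq> ?z v"
    using len uv graph A \<open>a \<noteq> b\<close> by (auto simp: is_graph_def)
  then obtain w where "w \<in> V" "\<not> accepts E P ?z w" by (rule solves_rejects_nonconstant[OF sol])
  ultimately show False by blast
qed

definition bits_sent :: "'a protocol \<Rightarrow> 'a \<Rightarrow> nat" where
  "bits_sent P w = (\<Sum>i | i < length (sched P) \<and> fst (sched P ! i) = w. snd (sched P ! i))"

lemma cost_eq_sum_bits_sent:
  assumes "wf_protocol V k P" "finite V"
  shows "cost P = (\<Sum>w\<in>V. bits_sent P w)"
proof -
  have "cost P = (\<Sum>i<length (sched P). snd (sched P ! i))"
    by (simp add: cost_def sum_list_sum_nth atLeast0LessThan)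
  also have "\<dots> = (\<Sum>w\<in>V. \<Sum>i | i \<in> {..<length (sched P)} \<and> fst (sched P ! i) = w. snd (sched P ! i))"
    using assms by (intro sum.group[symmetric]) (auto simp: wf_protocol_def)
  finally show ?thesis by (simp add: bits_sent_def)
qed

lemma length_transcript_nth:
  assumes "wf_protocol V k P" "i < length (sched P)" "length (x (fst (sched P ! i))) = k"
  shows "length (transcript E P x (length (sched P)) ! i) = snd (sched P ! i)"
  using assms by (simp add: transcript_nth wf_protocol_def)

lemma concat_injective_map_length:
  "map length xs = map length ys \<Longrightarrow> concat xs = concat ys \<Longrightarrow> xs = ys"
  by (induction xs arbitrary: ys) (auto simp: Cons_eq_map_conv)

lemma inj_on_bool_lists_length_le:
  fixes f :: "bool list \<Rightarrow> bool list"
  assumes "inj_on f {xs. length xs = k}" "f ` {xs. length xs = k} \<subseteq> {ys. length ys = m}"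
  shows "k \<le> m"
proof -
  have card: "card {xs :: bool list. length xs = n} = 2 ^ n" for n
    using card_lists_length_eq[of "UNIV :: bool set" n] by simp
  have "card {xs :: bool list. length xs = k} \<le> card {ys :: bool list. length ys = m}"
    using card_inj_on_le[OF assms] finite_lists_length_eq[of "UNIV :: bool set" m] by simp
  then show ?thesis by (simp add: card)
qed

text \<open>The messages of u and v, concatenated, encode every k-bit input injectively.\<close>
lemma edge_bits_sent_ge:
  assumes forest: "is_forest V E" and uv: "E u v" and sol: "solves V E k P"
  shows "k \<le> bits_sent P u + bits_sent P v"
proof -
  define n where "n = length (sched P)"
  define idx where "idx = filter (\<lambda>i. fst (sched P ! i) \<in> {u, v}) [0..<n]"
  define msgs where "msgs a = map (\<lambda>i. transcript E P (\<lambda>_. a) n ! i) idx" for a :: "bool list"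
  have wf: "wf_protocol V k P" using sol by (simp add: solves_def)
  have msg_length: "map length (msgs a) = map (\<lambda>i. snd (sched P ! i)) idx" if "length a = k" for a
    using length_transcript_nth[OF wf _, of _ "\<lambda>_. a"] that by (simp add: msgs_def idx_def n_def)
  have "inj_on (concat \<circ> msgs) {a. length a = k}"
  proof (rule inj_onI)
    fix a b assume a: "a \<in> {a. length a = k}" and b: "b \<in> {a. length a = k}"
      and "(concat \<circ> msgs) a = (concat \<circ> msgs) b"
    then have "msgs a = msgs b"
      using msg_length[of a] msg_length[of b] by (intro concat_injective_map_length) simp_all
    then show "a = b"
      using edge_messages_determine_input[OF forest uv sol] a b
      by (simp add: msgs_def idx_def n_def)
  qed
  moreover have "sum_list (map (\<lambda>i. snd (sched P ! i)) idx) = bits_sent P u + bits_sent P v"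
  proof -
    have "u \<noteq> v" using forest uv by (auto simp: is_forest_def is_graph_def)
    have "sum_list (map (\<lambda>i. snd (sched P ! i)) idx) = (\<Sum>i\<in>set idx. snd (sched P ! i))"
      by (simp add: sum_list_distinct_conv_sum_set idx_def)
    also have "set idx = {i. i < n \<and> fst (sched P ! i) = u} \<union> {i. i < n \<and> fst (sched P ! i) = v}"
      by (auto simp: idx_def)
    also have "(\<Sum>i\<in>\<dots>. snd (sched P ! i)) = bits_sent P u + bits_sent P v"
      using \<open>u \<noteq> v\<close> by (subst sum.union_disjoint) (auto simp: bits_sent_def n_def)
    finally show ?thesis .
  qed
  then have "(concat \<circ> msgs) ` {a. length a = k} \<subseteq> {bs. length bs = bits_sent P u + bits_sent P v}"
    using msg_length by (auto simp: length_concat)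
  ultimately show ?thesis by (rule inj_on_bool_lists_length_le)
qed

lemma vc_le_card: "vertex_cover V E S \<Longrightarrow> vc V E \<le> card S"
  unfolding vc_def by (rule Least_le) blast

lemma min_vertex_cover_exists:
  assumes "is_graph V E"
  obtains S where "min_vertex_cover V E S"
proof -
  have "vertex_cover V E V" using assms by (auto simp: vertex_cover_def is_graph_def)
  then have "\<exists>n S. vertex_cover V E S \<and> card S = n" by blast
  then have "\<exists>S. vertex_cover V E S \<and> card S = vc V E"
    unfolding vc_def by (rule LeastI_ex)
  then show ?thesis using that by (auto simp: min_vertex_cover_def)
qed

lemma forest_cost_lower_bound:
  assumes forest: "is_forest V E" and sol: "solves V E k P"
  shows "k * vc V E \<le> cost P"
proof -
  have "k \<le> bits_sent P a + bits_sent P c" if "E a c" for a c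
    using edge_bits_sent_ge[OF forest that sol] .
  then obtain S where S: "vertex_cover V E S" "k * card S \<le> (\<Sum>w\<in>V. bits_sent P w)"
    by (rule forest_vertex_cover_weight[OF forest])
  have "k * vc V E \<le> k * card S" using vc_le_card[OF S(1)] by simp
  also have "\<dots> \<le> (\<Sum>w\<in>V. bits_sent P w)" by (fact S(2))
  also have "\<dots> = cost P"
    using forest sol cost_eq_sum_bits_sent[of V k P]
    by (simp add: solves_def is_forest_def is_graph_def)
  finally show ?thesis .
qed

lemma simple_protocol_accepts:
  "accepts E (simple_protocol vs k) x w \<longleftrightarrow>
     (\<forall>s\<in>set vs. s = w \<or> E s w \<longrightarrow> x s = x w)"
proof -
  have "transcript E (simple_protocol vs k) x j = map (\<lambda>i. x (vs ! i)) [0..<j]" if "j \<le> length vs" for j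
    using that by (induction j) (simp_all add: Let_def simple_protocol_def sched_def msgf_def)
  then have "accepts E (simple_protocol vs k) x w \<longleftrightarrow>
      (\<forall>i<length vs. vs ! i = w \<or> E (vs ! i) w \<longrightarrow> x (vs ! i) = x w)"
    by (auto simp: accepts_def view_def simple_protocol_def sched_def decf_def)
  then show ?thesis by (simp add: all_set_conv_all_nth)
qed

lemma simple_protocol_cost: "cost (simple_protocol vs k) = length vs * k"
  by (induction vs) (simp_all add: cost_def simple_protocol_def sched_def)

lemma connected_graph_differing_edge:
  assumes "connected_graph V E" "u \<in> V" "v \<in> V" "x u \<noteq> x v"
  obtains a c where "E a c" "x a \<noteq> x c"
proof (rule ccontr)
  assume "\<not> thesis"
  then have edge_eq: "E a c \<Longrightarrow> x a = x c" for a c using that by blast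
  have "E\<^sup>*\<^sup>* u v" using assms by (simp add: connected_graph_def)
  then have "x u = x v" by (induction rule: rtranclp_induct) (auto dest: edge_eq)
  with assms(4) show False ..
qed

lemma simple_protocol_solves:
  assumes conn: "connected_graph V E" and cover: "vertex_cover V E (set vs)"
  shows "solves V E k (simple_protocol vs k)"
  unfolding solves_def
proof (intro conjI allI impI)
  have "set vs \<subseteq> V" using cover by (simp add: vertex_cover_def)
  then show "wf_protocol V k (simple_protocol vs k)"
    by (auto simp: wf_protocol_def simple_protocol_def sched_def msgf_def)
  fix x :: "'a \<Rightarrow> bool list"
  show "\<forall>v\<in>V. accepts E (simple_protocol vs k) x v" if "\<forall>u\<in>V. \<forall>v\<in>V. x u = x v"
    using that \<open>set vs \<subseteq> V\<close> unfolding simple_protocol_accepts by blast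
  show "\<exists>v\<in>V. \<not> accepts E (simple_protocol vs k) x v" if differ: "\<exists>u\<in>V. \<exists>v\<in>V. x u \<noteq> x v"
  proof -
    obtain a c where ac: "E a c" "x a \<noteq> x c"
      using differ connected_graph_differing_edge[OF conn] by blast
    have "a \<in> V" "c \<in> V" "E c a"
      using conn ac(1) by (auto simp: connected_graph_def is_graph_def)
    moreover have "a \<in> set vs \<or> c \<in> set vs" using cover ac(1) by (simp add: vertex_cover_def)
    then have "\<not> accepts E (simple_protocol vs k) x c \<or> \<not> accepts E (simple_protocol vs k) x a"
      using ac \<open>E c a\<close> by (auto simp: simple_protocol_accepts)
    ultimately show ?thesis by blast
  qed
qed

lemma opt_tree:
  assumes tree: "is_tree V E"
  shows "opt V E k = vc V E * k"
  unfolding opt_def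
proof (rule Least_equality)
  have conn: "connected_graph V E" using tree by (simp add: is_tree_def)
  then obtain S where S: "min_vertex_cover V E S"
    using min_vertex_cover_exists by (auto simp: connected_graph_def)
  moreover have "finite S"
    using S conn by (auto simp: min_vertex_cover_def vertex_cover_def connected_graph_def
        is_graph_def intro: finite_subset)
  ultimately obtain vs where "distinct vs" "set vs = S" "length vs = vc V E"
    by (metis distinct_card finite_distinct_list min_vertex_cover_def)
  then have "solves V E k (simple_protocol vs k)" "cost (simple_protocol vs k) = vc V E * k"
    using simple_protocol_solves[OF conn] S by (simp_all add: simple_protocol_cost min_vertex_cover_def)
  then show "\<exists>P. solves V E k P \<and> cost P = vc V E * k" by blast
next
  fix c assume "\<exists>P. solves V E k P \<and> cost P = c"
  then obtain P where P: "solves V E k P" "cost P = c" by blast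
  show "vc V E * k \<le> c"
    using forest_cost_lower_bound[OF is_tree_imp_forest[OF tree] P(1)] P(2) by (simp add: mult.commute)
qed

theorem theorem3p1:
  fixes V :: "'a set" and E :: "'a \<Rightarrow> 'a \<Rightarrow> bool"
  assumes "is_tree V E"
  shows "((\<lambda>k. real (opt V E k) / real k) \<longlonglongrightarrow> real (vc V E)) \<and>
    (\<forall>S vs k. min_vertex_cover V E S \<and> distinct vs \<and> set vs = S \<and> k > 0 \<longrightarrow>
           solves V E k (simple_protocol vs k) \<and> cost (simple_protocol vs k) = card S * k
           \<and> (\<lambda>k. real (opt V E k) / real k) \<longlonglongrightarrow> real (card S))"
proof -
  have lim: "(\<lambda>k. real (opt V E k) / real k) \<longlonglongrightarrow> real (vc V E)"
  proof (rule Lim_transform_eventually[OF tendsto_const])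
    show "\<forall>\<^sub>F k in sequentially. real (vc V E) = real (opt V E k) / real k"
      using eventually_gt_at_top[of "0::nat"] by eventually_elim (simp add: opt_tree[OF assms])
  qed
  have conn: "connected_graph V E" using assms by (simp add: is_tree_def)
  show ?thesis
  proof (intro conjI allI impI lim)
    fix S vs and k :: nat
    assume "min_vertex_cover V E S \<and> distinct vs \<and> set vs = S \<and> 0 < k"
    then have S: "vertex_cover V E S" "card S = vc V E" and vs: "distinct vs" "set vs = S"
      by (simp_all add: min_vertex_cover_def)
    show "solves V E k (simple_protocol vs k)" using simple_protocol_solves[OF conn] S vs by simp
    show "cost (simple_protocol vs k) = card S * k"
      using vs by (simp add: simple_protocol_cost distinct_card[symmetric])
    show "(\<lambda>k. real (opt V E k) / real k) \<longlonglongrightarrow> real (card S)" using lim S by simp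
  qed
qed

end
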